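(* Let $H\trianglelefteq G\le\mathrm{Aut}~T$ be closed fractal subgroups with $H\ne1$. If $H$ is branch, then $G_H$ is branch and $$|G_H:H|=|\pi_D(G_H):\pi_D(H)|<\infty,$$ where $D$ is the depth of $H$ as a group of finite type.
   Context: $T$ is the $d$-adic rooted tree; $\mathcal L_n$ its $n$th level; $T^n$ the subtree of vertices at depth $\le n$; $\pi_n:\mathrm{Aut}~T\to\mathrm{Aut}~T^n$ restriction; congruence topology on $\mathrm{Aut}~T$. For $g\in\mathrm{Aut}~T$, vertex $v$ and $1\le n\le\infty$, the section $g|_v^n\in\mathrm{Aut}~T^n$ is defined by $(vw)^g=v^gw^{g|_v^n}$ for $w\in T^n$; write $g|_v=g|_v^\infty$. Fractal: closed under sections, level-transitive, and $\{g|_v:g\in G,v^g=v\}=G$ for all $v$. $\mathrm{rist}_G(v)$: elements fixing all non-descendants of $v$; $\mathrm{Rist}_G(n)=\prod_{v\in\mathcal L_n}\mathrm{rist}_G(v)$; $G$ branch if level-transitive and $|G:\mathrm{Rist}_G(n)|<\infty$ for all $n$. For $D\ge1$ and $\mathcal P\le\mathrm{Aut}~T^D$, $G_{\mathcal P}:=\{g:g|_v^D\in\mathcal P\ \forall v\}$; a group is of finite type of depth $D$ if it equals some such $G_{\mathcal P}$ (a closed fractal group is branch iff it is of finite type). $G_H:=\{g\in G:(g|_v)(g|_w)^{-1}\in H\ \forall v,w\}$. *)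

theory Defs
  imports "HOL-Algebra.Algebra" "HOL-Library.Sublist"
begin

text \<open>Vertices of the d-adic rooted tree T are words over {0..<d}; the root is []. The action is on the right: v^g = g v, and the product
  g h (first g, then h) is the function h o g.\<close>

definition V :: "nat \<Rightarrow> nat list set" where
  "V d = {w. set w \<subseteq> {..<d}}"

definition Lev :: "nat \<Rightarrow> nat \<Rightarrow> nat list set" where
  "Lev d n = {w \<in> V d. length w = n}"

definition Vle :: "nat \<Rightarrow> nat \<Rightarrow> nat list set" where
  "Vle d n = {w \<in> V d. length w \<le> n}"

definition is_aut_on :: "nat list set \<Rightarrow> (nat list \<Rightarrow> nat list) \<Rightarrow> bool" where
  "is_aut_on S f \<longleftrightarrow> bij_betw f S S \<and> (\<forall>w\<in>S. length (f w) = length w)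
     \<and> (\<forall>u\<in>S. \<forall>w\<in>S. prefix u w \<longrightarrow> prefix (f u) (f w)) \<and> (\<forall>w. w \<notin> S \<longrightarrow> f w = w)"

definition AutT :: "nat \<Rightarrow> (nat list \<Rightarrow> nat list) monoid" where
  "AutT d = \<lparr>carrier = {f. is_aut_on (V d) f}, monoid.mult = (\<lambda>g h. h \<circ> g), monoid.one = id\<rparr>"

definition AutTn :: "nat \<Rightarrow> nat \<Rightarrow> (nat list \<Rightarrow> nat list) monoid" where
  "AutTn d n = \<lparr>carrier = {f. is_aut_on (Vle d n) f}, monoid.mult = (\<lambda>g h. h \<circ> g), monoid.one = id\<rparr>"

definition restr :: "nat \<Rightarrow> nat \<Rightarrow> (nat list \<Rightarrow> nat list) \<Rightarrow> (nat list \<Rightarrow> nat list)" where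
  "restr d n g = (\<lambda>w. if w \<in> Vle d n then g w else w)"

text \<open>Section g|_v : (v w)^g = v^g w^(g|_v).\<close>
definition sec :: "nat \<Rightarrow> (nat list \<Rightarrow> nat list) \<Rightarrow> nat list \<Rightarrow> (nat list \<Rightarrow> nat list)" where
  "sec d g v = (\<lambda>w. if w \<in> V d then drop (length v) (g (v @ w)) else w)"

definition secn :: "nat \<Rightarrow> nat \<Rightarrow> (nat list \<Rightarrow> nat list) \<Rightarrow> nat list \<Rightarrow> (nat list \<Rightarrow> nat list)" where
  "secn d n g v = restr d n (sec d g v)"

definition closed_cong :: "nat \<Rightarrow> (nat list \<Rightarrow> nat list) set \<Rightarrow> bool" where
  "closed_cong d G \<longleftrightarrow> (\<forall>g \<in> carrier (AutT d).
      (\<forall>n. \<exists>h\<in>G. restr d n h = restr d n g) \<longrightarrow> g \<in> G)"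

definition level_transitive :: "nat \<Rightarrow> (nat list \<Rightarrow> nat list) set \<Rightarrow> bool" where
  "level_transitive d G \<longleftrightarrow> (\<forall>n. \<forall>u\<in>Lev d n. \<forall>v\<in>Lev d n. \<exists>g\<in>G. g u = v)"

definition fractal :: "nat \<Rightarrow> (nat list \<Rightarrow> nat list) set \<Rightarrow> bool" where
  "fractal d G \<longleftrightarrow> (\<forall>g\<in>G. \<forall>v\<in>V d. sec d g v \<in> G) \<and> level_transitive d G
     \<and> (\<forall>v\<in>V d. {sec d g v | g. g \<in> G \<and> g v = v} = G)"

definition rist :: "nat \<Rightarrow> (nat list \<Rightarrow> nat list) set \<Rightarrow> nat list \<Rightarrow> (nat list \<Rightarrow> nat list) set" where
  "rist d G v = {g \<in> G. \<forall>u\<in>V d. \<not> prefix v u \<longrightarrow> g u = u}"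

text \<open>Rist_G(n): the (internal direct) product of the rist_G(v), v in level n,
  i.e. the subgroup they generate.\<close>
definition Rist :: "nat \<Rightarrow> (nat list \<Rightarrow> nat list) set \<Rightarrow> nat \<Rightarrow> (nat list \<Rightarrow> nat list) set" where
  "Rist d G n = generate (AutT d) (\<Union>v\<in>Lev d n. rist d G v)"

text \<open>Set of right cosets of B in A (inside the group structure M); |A:B| is its cardinality.\<close>
definition cosets_in :: "('a, 'b) monoid_scheme \<Rightarrow> 'a set \<Rightarrow> 'a set \<Rightarrow> 'a set set" where
  "cosets_in M A B = rcosets\<^bsub>M\<lparr>carrier := A\<rparr>\<^esub> B"

definition branch :: "nat \<Rightarrow> (nat list \<Rightarrow> nat list) set \<Rightarrow> bool" where
  "branch d G \<longleftrightarrow> level_transitive d G \<and> (\<forall>n. finite (cosets_in (AutT d) G (Rist d G n)))"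

definition GP :: "nat \<Rightarrow> nat \<Rightarrow> (nat list \<Rightarrow> nat list) set \<Rightarrow> (nat list \<Rightarrow> nat list) set" where
  "GP d D P = {g \<in> carrier (AutT d). \<forall>v\<in>V d. secn d D g v \<in> P}"

definition GH :: "nat \<Rightarrow> (nat list \<Rightarrow> nat list) set \<Rightarrow> (nat list \<Rightarrow> nat list) set \<Rightarrow> (nat list \<Rightarrow> nat list) set" where
  "GH d G H = {g \<in> G. \<forall>v\<in>V d. \<forall>w\<in>V d.
       sec d g v \<otimes>\<^bsub>AutT d\<^esub> inv\<^bsub>AutT d\<^esub> (sec d g w) \<in> H}"

end

theory Submission
  imports Defs
begin

text \<open>
  A closed fractal branch group \<open>H\<close> is of finite type. For a first-level vertex \<open>x\<close>, the
  group \<open>L\<^sub>x = {k. k lifted below x lies in H}\<close> contains the sections at \<open>x\<close> of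
  \<open>rist\<^sub>H(x)\<close>, so by fractality it has finite index in \<open>H\<close>; being closed, it contains a whole
  level stabiliser \<open>St\<^sub>H(M)\<close>. With \<open>D = M + 1\<close> and \<open>P = \<pi>\<^sub>D(H)\<close>, every element of \<open>G\<^sub>P\<close>
  is approximated level by level by elements of \<open>H\<close>, so \<open>H = G\<^sub>P\<close> by closedness.

  Now let \<open>H = G\<^sub>P\<close> be any such representation. If \<open>f \<in> G\<^sub>H\<close> acts trivially on \<open>T\<^sup>D\<close>, then
  every section \<open>f|\<^sub>v\<close> lies in \<open>H f\<close>, so \<open>f|\<^sub>v\<^sup>D \<in> P\<close> and \<open>f \<in> H\<close>. Hence \<open>\<pi>\<^sub>D\<close> maps the cosets
  of \<open>H\<close> in \<open>G\<^sub>H\<close> bijectively onto those of \<open>\<pi>\<^sub>D(H)\<close> in \<open>\<pi>\<^sub>D(G\<^sub>H)\<close>, a finite set. Finally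
  \<open>Rist\<^sub>H(n) \<le> Rist\<^bsub>G\<^sub>H\<^esub>(n)\<close>, so \<open>G\<^sub>H\<close> inherits the branch property from its finite-index
  subgroup \<open>H\<close>.
\<close>

section \<open>Indices of subgroups\<close>

lemma cosets_in_eq: "cosets_in M A B = (\<lambda>a. B #>\<^bsub>M\<^esub> a) ` A"
  unfolding cosets_in_def RCOSETS_def r_coset_def by auto

lemma (in group) finite_rcoset_representatives:
  assumes K: "subgroup K G" and S: "S \<subseteq> carrier G" and fin: "finite ((\<lambda>a. K #> a) ` S)"
  obtains R where "finite R" "R \<subseteq> S" "\<And>a. a \<in> S \<Longrightarrow> \<exists>r\<in>R. \<exists>k\<in>K. a = k \<otimes> r"
proof
  let ?rep = "\<lambda>C. SOME a. a \<in> S \<and> C = K #> a"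
  have rep: "?rep (K #> a) \<in> S \<and> K #> a = K #> ?rep (K #> a)" if "a \<in> S" for a
    by (rule someI_ex[of "\<lambda>b. b \<in> S \<and> K #> a = K #> b"]) (use that in blast)
  show "finite (?rep ` (\<lambda>a. K #> a) ` S)" using fin by (rule finite_imageI)
  show "?rep ` (\<lambda>a. K #> a) ` S \<subseteq> S" using rep by blast
  fix a assume a: "a \<in> S"
  define r where "r = ?rep (K #> a)"
  have "K #> a = K #> r" using rep[OF a] unfolding r_def by blast
  moreover have "a \<in> K #> a" using rcos_self[OF _ K] a S by blast
  ultimately have "a \<in> K #> r" by simp
  then show "\<exists>r\<in>?rep ` (\<lambda>a. K #> a) ` S. \<exists>k\<in>K. a = k \<otimes> r"
    using a unfolding r_def r_coset_def by blast
qed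

lemma (in group) finite_index_trans:
  assumes H: "subgroup H G" and R: "subgroup R G" and L: "subgroup L G" and "L \<subseteq> R"
    and K: "K \<subseteq> carrier G"
    and fin_KH: "finite ((\<lambda>a. H #> a) ` K)" and fin_HL: "finite ((\<lambda>a. L #> a) ` H)"
  shows "finite ((\<lambda>a. R #> a) ` K)"
proof -
  obtain R1 where R1: "finite R1" "R1 \<subseteq> K" and cover1: "\<And>a. a \<in> K \<Longrightarrow> \<exists>r\<in>R1. \<exists>h\<in>H. a = h \<otimes> r"
    using finite_rcoset_representatives[OF H K fin_KH] by blast
  obtain R2 where R2: "finite R2" "R2 \<subseteq> H" and cover2: "\<And>a. a \<in> H \<Longrightarrow> \<exists>r\<in>R2. \<exists>l\<in>L. a = l \<otimes> r"
    using finite_rcoset_representatives[OF L subgroup.subset[OF H] fin_HL] by blast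
  have RC: "R \<subseteq> carrier G" and HC: "H \<subseteq> carrier G" using R H subgroup.subset by blast+
  have "(\<lambda>a. R #> a) ` K \<subseteq> (\<lambda>(r2, r1). R #> (r2 \<otimes> r1)) ` (R2 \<times> R1)"
  proof
    fix c assume "c \<in> (\<lambda>a. R #> a) ` K"
    then obtain a where a: "a \<in> K" and c: "c = R #> a" by blast
    obtain r1 h where r1: "r1 \<in> R1" and h: "h \<in> H" and ah: "a = h \<otimes> r1" using cover1[OF a] by blast
    obtain r2 l where r2: "r2 \<in> R2" and l: "l \<in> L" and hl: "h = l \<otimes> r2" using cover2[OF h] by blast
    have lR: "l \<in> R" using l \<open>L \<subseteq> R\<close> by blast
    have r1C: "r1 \<in> carrier G" and r2C: "r2 \<in> carrier G" using r1 r2 R1 R2 K HC by auto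
    have "R #> a = (R #> l) #> (r2 \<otimes> r1)"
      using ah hl lR RC r1C r2C by (simp add: coset_mult_assoc m_assoc subset_iff)
    also have "\<dots> = R #> (r2 \<otimes> r1)" using subgroup.rcos_const[OF R is_group lR] by simp
    finally show "c \<in> (\<lambda>(r2, r1). R #> (r2 \<otimes> r1)) ` (R2 \<times> R1)" using c r1 r2 by force
  qed
  then show ?thesis using R1 R2 finite_subset by blast
qed

context group_hom
begin

lemma image_r_coset:
  assumes "L \<subseteq> carrier G" and "a \<in> carrier G"
  shows "h ` (L #> a) = (h ` L) #>\<^bsub>H\<^esub> h a"
proof -
  have "h ` (L #> a) = (\<lambda>l. h (l \<otimes> a)) ` L"
    unfolding r_coset_def by auto
  also have "\<dots> = (\<lambda>l. h l \<otimes>\<^bsub>H\<^esub> h a) ` L"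
    using assms by (intro image_cong) (auto simp: subset_iff)
  also have "\<dots> = (h ` L) #>\<^bsub>H\<^esub> h a"
    unfolding r_coset_def by blast
  finally show ?thesis .
qed

lemma bij_betw_image_cosets_in:
  assumes K: "subgroup K G" and L: "subgroup L G" and "L \<subseteq> K"
    and ker: "\<And>k. k \<in> K \<Longrightarrow> h k = \<one>\<^bsub>H\<^esub> \<Longrightarrow> k \<in> L"
  shows "bij_betw (image h) (cosets_in G K L) (cosets_in H (h ` K) (h ` L))"
proof -
  have KC: "K \<subseteq> carrier G" and LC: "L \<subseteq> carrier G" using K L subgroup.subset by blast+
  have inj: "inj_on (image h) (cosets_in G K L)"
  proof (rule inj_onI)
    fix C1 C2 assume "C1 \<in> cosets_in G K L" "C2 \<in> cosets_in G K L" and e: "h ` C1 = h ` C2"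
    then obtain a b where a: "a \<in> K" "C1 = L #> a" and b: "b \<in> K" "C2 = L #> b"
      unfolding cosets_in_eq by blast
    have aC: "a \<in> carrier G" and bC: "b \<in> carrier G" using a b KC by auto
    have "h a \<in> h ` C2" using e a G.rcos_self[OF aC L] by blast
    then obtain l where l: "l \<in> L" and hl: "h a = h (l \<otimes> b)" using b unfolding r_coset_def by blast
    have lbK: "l \<otimes> b \<in> K" using l b(1) \<open>L \<subseteq> K\<close> subgroup.m_closed[OF K] by blast
    have lbC: "l \<otimes> b \<in> carrier G" using lbK KC by blast
    let ?k = "a \<otimes> inv (l \<otimes> b)"
    have "?k \<in> K" using a(1) lbK K by (simp add: subgroup.m_closed subgroup.m_inv_closed)
    moreover have "h ?k = \<one>\<^bsub>H\<^esub>" using hl aC lbC by simp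
    ultimately have kL: "?k \<in> L" by (rule ker)
    have "a = (?k \<otimes> l) \<otimes> b" using aC lbC l LC bC by (simp add: G.m_assoc subset_iff)
    then have "a \<in> L #> b"
      unfolding r_coset_def using kL l subgroup.m_closed[OF L] by blast
    then show "C1 = C2" using a b G.repr_independence[OF _ bC L] by simp
  qed
  have "image h ` cosets_in G K L = (\<lambda>a. h ` (L #> a)) ` K"
    unfolding cosets_in_eq image_image ..
  also have "\<dots> = (\<lambda>a. (h ` L) #>\<^bsub>H\<^esub> h a) ` K"
    using image_r_coset[OF LC] KC by (intro image_cong) auto
  also have "\<dots> = cosets_in H (h ` K) (h ` L)"
    unfolding cosets_in_eq image_image ..
  finally show ?thesis using inj by (simp add: bij_betw_def)
qed

lemma finite_card_cosets_in_image:
  assumes "subgroup K G" "subgroup L G" "L \<subseteq> K"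
    and "\<And>k. k \<in> K \<Longrightarrow> h k = \<one>\<^bsub>H\<^esub> \<Longrightarrow> k \<in> L"
    and "finite (carrier H)"
  shows "finite (cosets_in G K L) \<and> card (cosets_in G K L) = card (cosets_in H (h ` K) (h ` L))"
proof -
  have "h ` L \<subseteq> carrier H" "h ` K \<subseteq> carrier H"
    using assms(1,2) by (auto dest: subgroup.mem_carrier)
  then have "cosets_in H (h ` K) (h ` L) \<subseteq> Pow (carrier H)"
    unfolding cosets_in_def RCOSETS_def r_coset_def by auto
  then have "finite (cosets_in H (h ` K) (h ` L))"
    using assms(5) by (rule finite_subset[OF _ iffD2[OF finite_Pow_iff]])
  then show ?thesis
    using bij_betw_image_cosets_in[OF assms(1-4)] bij_betw_finite bij_betw_same_card by blast
qed

end

section \<open>Automorphism groups of prefix-closed trees\<close>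

definition aut_group :: "nat list set \<Rightarrow> (nat list \<Rightarrow> nat list) monoid" where
  "aut_group S = \<lparr>carrier = {f. is_aut_on S f}, monoid.mult = (\<lambda>g h. h \<circ> g), monoid.one = id\<rparr>"

lemma AutT_eq_aut_group: "AutT d = aut_group (V d)"
  by (simp add: AutT_def aut_group_def)

lemma AutTn_eq_aut_group: "AutTn d n = aut_group (Vle d n)"
  by (simp add: AutTn_def aut_group_def)

definition prefix_closed :: "nat list set \<Rightarrow> bool" where
  "prefix_closed S \<longleftrightarrow> (\<forall>w\<in>S. \<forall>u. prefix u w \<longrightarrow> u \<in> S)"

lemma prefix_closed_V: "prefix_closed (V d)"
  by (auto simp: prefix_closed_def V_def prefix_def)

lemma prefix_closed_Vle: "prefix_closed (Vle d n)"
  by (auto simp: prefix_closed_def Vle_def V_def prefix_def)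

lemma prefix_same_length_eq: "prefix a w \<Longrightarrow> prefix b w \<Longrightarrow> length a = length b \<Longrightarrow> a = b"
  by (metis prefix_length_prefix prefix_order.antisym order_refl)

lemma is_aut_on_comp: "is_aut_on S f \<Longrightarrow> is_aut_on S g \<Longrightarrow> is_aut_on S (g \<circ> f)"
  unfolding is_aut_on_def by (auto intro: bij_betw_trans dest: bij_betwE)

lemma is_aut_on_id: "is_aut_on S id"
  by (auto simp: is_aut_on_def)

lemma is_aut_on_inverse:
  assumes S: "prefix_closed S" and f: "is_aut_on S f"
  defines "y \<equiv> \<lambda>w. if w \<in> S then inv_into S f w else w"
  shows "is_aut_on S y" and "f \<circ> y = id"
proof -
  have bij: "bij_betw f S S" and len: "\<And>w. w \<in> S \<Longrightarrow> length (f w) = length w"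
    and pre: "\<And>u w. u \<in> S \<Longrightarrow> w \<in> S \<Longrightarrow> prefix u w \<Longrightarrow> prefix (f u) (f w)"
    and out: "\<And>w. w \<notin> S \<Longrightarrow> f w = w" using f by (auto simp: is_aut_on_def)
  have yS: "\<And>w. w \<in> S \<Longrightarrow> y w \<in> S"
    unfolding y_def using bij by (metis bij_betw_def inv_into_into)
  have fy: "\<And>w. w \<in> S \<Longrightarrow> f (y w) = w"
    unfolding y_def using bij by (simp add: bij_betw_def f_inv_into_f)
  have yf: "\<And>w. w \<in> S \<Longrightarrow> y (f w) = w"
    unfolding y_def using bij by (metis bij_betw_def bij_betw_imp_surj_on image_eqI inv_into_f_f)
  have leny: "\<And>w. w \<in> S \<Longrightarrow> length (y w) = length w"
    by (metis fy len yS)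
  have prey: "prefix (y u) (y w)" if u: "u \<in> S" and w: "w \<in> S" and uw: "prefix u w" for u w
  proof -
    let ?u' = "take (length u) (y w)"
    have u'S: "?u' \<in> S" using S yS[OF w] unfolding prefix_closed_def by (meson take_is_prefix)
    have "prefix (f ?u') w" using pre[OF u'S yS[OF w] take_is_prefix] fy[OF w] by simp
    moreover have "length (f ?u') = length u"
      using len[OF u'S] leny[OF w] prefix_length_le[OF uw] by simp
    ultimately have "f ?u' = u" using uw prefix_same_length_eq by blast
    then show ?thesis using yf[OF u'S] take_is_prefix by metis
  qed
  have "bij_betw y S S"
    unfolding y_def using bij_betw_inv_into[OF bij] by (simp add: bij_betw_def inj_on_def)
  then show "is_aut_on S y" unfolding is_aut_on_def using leny prey by (auto simp: y_def)
  show "f \<circ> y = id" by (rule ext) (metis comp_apply id_apply fy out y_def)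
qed

lemma group_aut_group: assumes "prefix_closed S" shows "group (aut_group S)"
proof (rule groupI)
  fix f assume "f \<in> carrier (aut_group S)"
  then show "\<exists>y\<in>carrier (aut_group S). y \<otimes>\<^bsub>aut_group S\<^esub> f = \<one>\<^bsub>aut_group S\<^esub>"
    using is_aut_on_inverse[OF assms] by (auto simp: aut_group_def)
qed (auto simp: aut_group_def is_aut_on_comp is_aut_on_id comp_assoc)

interpretation AutT: group "AutT d" for d
  by (simp add: AutT_eq_aut_group group_aut_group prefix_closed_V)

interpretation AutTn: group "AutTn d n" for d n
  by (simp add: AutTn_eq_aut_group group_aut_group prefix_closed_Vle)

lemma carrier_AutT_iff: "g \<in> carrier (AutT d) \<longleftrightarrow> is_aut_on (V d) g"
  by (simp add: AutT_def)

lemma carrier_AutTn_iff: "g \<in> carrier (AutTn d n) \<longleftrightarrow> is_aut_on (Vle d n) g"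
  by (simp add: AutTn_def)

lemma AutT_mult: "g \<otimes>\<^bsub>AutT d\<^esub> h = h \<circ> g"
  by (simp add: AutT_def)

lemma AutT_one: "\<one>\<^bsub>AutT d\<^esub> = id"
  by (simp add: AutT_def)

lemma AutTn_mult: "g \<otimes>\<^bsub>AutTn d n\<^esub> h = h \<circ> g"
  by (simp add: AutTn_def)

lemma AutTn_one: "\<one>\<^bsub>AutTn d n\<^esub> = id"
  by (simp add: AutTn_def)

lemma append_in_V_iff [simp]: "v @ u \<in> V d \<longleftrightarrow> v \<in> V d \<and> u \<in> V d"
  by (auto simp: V_def)

lemma drop_in_V: "w \<in> V d \<Longrightarrow> drop n w \<in> V d"
  by (auto simp: V_def dest: in_set_dropD)

lemma take_in_V: "w \<in> V d \<Longrightarrow> take n w \<in> V d"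
  by (auto simp: V_def dest: in_set_takeD)

lemma Nil_in_V [simp]: "[] \<in> V d"
  by (simp add: V_def)

lemma Lev_subset_V: "Lev d n \<subseteq> V d"
  by (auto simp: Lev_def)

lemma finite_Vle: "finite (Vle d n)"
proof -
  have "Vle d n = {xs. set xs \<subseteq> {..<d} \<and> length xs \<le> n}" by (auto simp: Vle_def V_def)
  then show ?thesis using finite_lists_length_le[of "{..<d}" n] by simp
qed

lemma finite_Lev: "finite (Lev d n)"
  by (rule finite_subset[OF _ finite_Vle[of d n]]) (auto simp: Lev_def Vle_def)

lemma finite_carrier_AutTn: "finite (carrier (AutTn d n))"
proof -
  let ?S = "Vle d n"
  have "(\<lambda>f. restrict f ?S) ` carrier (AutTn d n) \<subseteq> PiE ?S (\<lambda>_. ?S)"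
    by (force simp: carrier_AutTn_iff is_aut_on_def bij_betw_def)
  then have "finite ((\<lambda>f. restrict f ?S) ` carrier (AutTn d n))"
    by (rule finite_subset) (simp add: finite_PiE finite_Vle)
  moreover have "inj_on (\<lambda>f. restrict f ?S) (carrier (AutTn d n))"
    by (rule inj_onI) (simp add: carrier_AutTn_iff is_aut_on_def fun_eq_iff restrict_def, metis)
  ultimately show ?thesis using finite_imageD by blast
qed

context
  fixes d :: nat and g :: "nat list \<Rightarrow> nat list"
  assumes g: "g \<in> carrier (AutT d)"
begin

lemma aut_in_V: "w \<in> V d \<Longrightarrow> g w \<in> V d"
  using g unfolding carrier_AutT_iff is_aut_on_def by (auto dest: bij_betwE)

lemma aut_length: "w \<in> V d \<Longrightarrow> length (g w) = length w"
  using g unfolding carrier_AutT_iff is_aut_on_def by auto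

lemma aut_prefix: "u \<in> V d \<Longrightarrow> w \<in> V d \<Longrightarrow> prefix u w \<Longrightarrow> prefix (g u) (g w)"
  using g unfolding carrier_AutT_iff is_aut_on_def by auto

lemma aut_outside: "w \<notin> V d \<Longrightarrow> g w = w"
  using g unfolding carrier_AutT_iff is_aut_on_def by auto

lemma aut_inj: "g u = g w \<Longrightarrow> u = w"
  using g aut_in_V aut_outside unfolding carrier_AutT_iff is_aut_on_def bij_betw_def inj_on_def
  by metis

lemma aut_inv_apply: "g ((inv\<^bsub>AutT d\<^esub> g) w) = w"
  using fun_cong[OF AutT.l_inv[OF g], of w] by (simp add: AutT_mult AutT_one)

lemma inv_aut_apply: "(inv\<^bsub>AutT d\<^esub> g) (g w) = w"
  using fun_cong[OF AutT.r_inv[OF g], of w] by (simp add: AutT_mult AutT_one)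

end

section \<open>Sections and restrictions\<close>

context
  fixes d :: nat and g :: "nat list \<Rightarrow> nat list"
  assumes g: "g \<in> carrier (AutT d)"
begin

lemma aut_append: "v \<in> V d \<Longrightarrow> u \<in> V d \<Longrightarrow> g (v @ u) = g v @ sec d g v u"
proof -
  assume v: "v \<in> V d" and u: "u \<in> V d"
  have "prefix (g v) (g (v @ u))" using aut_prefix[OF g, of v "v @ u"] v u by simp
  then obtain z where "g (v @ u) = g v @ z" by (auto simp: prefix_def)
  moreover have "length (g v) = length v" using aut_length[OF g v] .
  ultimately show ?thesis using u by (simp add: sec_def)
qed

lemma sec_Nil: "sec d g [] = g"
  by (rule ext) (simp add: sec_def aut_outside[OF g])

lemma sec_carrier: assumes v: "v \<in> V d" shows "sec d g v \<in> carrier (AutT d)"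
proof -
  let ?s = "sec d g v"
  have inj: "inj_on ?s (V d)"
    by (rule inj_onI) (metis aut_append[OF v] aut_inj[OF g] same_append_eq)
  have surj: "V d \<subseteq> ?s ` V d"
  proof
    fix u assume u: "u \<in> V d"
    \<comment> \<open>the preimage \<open>w\<close> of \<open>g v @ u\<close> lies below \<open>v\<close>: its prefix of length \<open>|v|\<close> has image \<open>g v\<close>\<close>
    define w where "w = (inv\<^bsub>AutT d\<^esub> g) (g v @ u)"
    have gw: "g w = g v @ u" using aut_inv_apply[OF g] w_def by simp
    have wV: "w \<in> V d" by (metis aut_outside[OF g] gw aut_in_V[OF g] append_in_V_iff u v)
    have tV: "take (length v) w \<in> V d" using take_in_V[OF wV] .
    have "length w = length v + length u" using aut_length[OF g] wV v gw by (metis length_append)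
    then have "length (g (take (length v) w)) = length (g v)" using aut_length[OF g] tV v by simp
    moreover have "prefix (g (take (length v) w)) (g w)"
      using aut_prefix[OF g tV wV] take_is_prefix by blast
    ultimately have "g (take (length v) w) = g v"
      using gw prefix_same_length_eq by (metis prefix_prefix prefix_order.refl)
    then have "w = v @ drop (length v) w" using aut_inj[OF g] by (metis append_take_drop_id)
    moreover have "drop (length v) w \<in> V d" using drop_in_V[OF wV] .
    ultimately show "u \<in> ?s ` V d" using aut_append[OF v] gw by (metis image_eqI same_append_eq)
  qed
  have "bij_betw ?s (V d) (V d)"
    using inj surj aut_in_V[OF g] v unfolding bij_betw_def by (auto simp: sec_def drop_in_V)
  moreover have "prefix (?s u) (?s w)" if "u \<in> V d" "w \<in> V d" "prefix u w" for u w
    using aut_prefix[OF g, of "v @ u" "v @ w"] aut_append[OF v] that v by simp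
  ultimately show ?thesis
    unfolding carrier_AutT_iff is_aut_on_def using aut_length[OF g, of "v @ _"] v
    by (auto simp: sec_def)
qed

end

lemma sec_id: "sec d id v = id"
  by (rule ext) (simp add: sec_def)

lemma sec_mult:
  assumes g: "g \<in> carrier (AutT d)" and k: "k \<in> carrier (AutT d)" and v: "v \<in> V d"
  shows "sec d (g \<otimes>\<^bsub>AutT d\<^esub> k) v = sec d g v \<otimes>\<^bsub>AutT d\<^esub> sec d k (g v)"
proof (rule ext)
  fix u
  show "sec d (g \<otimes>\<^bsub>AutT d\<^esub> k) v u = (sec d g v \<otimes>\<^bsub>AutT d\<^esub> sec d k (g v)) u"
  proof (cases "u \<in> V d")
    case True
    have gv: "g v \<in> V d" using aut_in_V[OF g v] .
    have sV: "sec d g v u \<in> V d" using aut_in_V[OF sec_carrier[OF g v] True] .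
    have "k (g (v @ u)) = k (g v) @ sec d k (g v) (sec d g v u)"
      using aut_append[OF g v True] aut_append[OF k gv sV] by simp
    moreover have "length (k (g v)) = length v" using aut_length[OF k gv] aut_length[OF g v] by simp
    ultimately show ?thesis using True sV by (simp add: sec_def AutT_mult)
  qed (simp add: sec_def AutT_mult)
qed

lemma sec_inv:
  assumes g: "g \<in> carrier (AutT d)" and v: "v \<in> V d"
  shows "sec d (inv\<^bsub>AutT d\<^esub> g) v = inv\<^bsub>AutT d\<^esub> (sec d g ((inv\<^bsub>AutT d\<^esub> g) v))"
proof -
  let ?i = "inv\<^bsub>AutT d\<^esub> g"
  have i: "?i \<in> carrier (AutT d)" using AutT.inv_closed[OF g] .
  have "sec d ?i v \<otimes>\<^bsub>AutT d\<^esub> sec d g (?i v) = sec d (?i \<otimes>\<^bsub>AutT d\<^esub> g) v"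
    using sec_mult[OF i g v] by simp
  also have "\<dots> = \<one>\<^bsub>AutT d\<^esub>" using AutT.l_inv[OF g] sec_id by (simp add: AutT_one)
  finally show ?thesis
    using AutT.inv_equality sec_carrier[OF g aut_in_V[OF i v]] sec_carrier[OF i v] by metis
qed

lemma sec_sec:
  assumes "v \<in> V d" and "w \<in> V d"
  shows "sec d (sec d g v) w = sec d g (v @ w)"
  using assms by (auto simp: sec_def fun_eq_iff add.commute)

lemma restr_eq_iff: "restr d n a = restr d n b \<longleftrightarrow> (\<forall>w\<in>Vle d n. a w = b w)"
  unfolding restr_def by (auto simp: fun_eq_iff)

lemma restr_eq_mono: "restr d n a = restr d n b \<Longrightarrow> m \<le> n \<Longrightarrow> restr d m a = restr d m b"
  unfolding restr_eq_iff Vle_def by auto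

lemma restr_eq_id_iff: "restr d n a = id \<longleftrightarrow> (\<forall>w\<in>Vle d n. a w = w)"
  unfolding restr_def by (auto simp: fun_eq_iff)

lemma restr_id_mono: "restr d n a = id \<Longrightarrow> m \<le> n \<Longrightarrow> restr d m a = id"
  unfolding restr_eq_id_iff Vle_def by auto

lemma restr_carrier: assumes g: "g \<in> carrier (AutT d)" shows "restr d n g \<in> carrier (AutTn d n)"
proof -
  let ?r = "restr d n g"
  have gVle: "w \<in> Vle d n \<Longrightarrow> g w \<in> Vle d n" for w
    using aut_in_V[OF g] aut_length[OF g] by (auto simp: Vle_def)
  have "Vle d n \<subseteq> ?r ` Vle d n"
  proof
    fix w assume w: "w \<in> Vle d n"
    let ?u = "(inv\<^bsub>AutT d\<^esub> g) w"
    have "?u \<in> V d" using w aut_in_V[OF AutT.inv_closed[OF g]] by (auto simp: Vle_def)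
    then have u: "?u \<in> Vle d n"
      using aut_length[OF g] aut_inv_apply[OF g] w
      by (metis (mono_tags, lifting) Vle_def mem_Collect_eq)
    then show "w \<in> ?r ` Vle d n"
      by (rule rev_image_eqI) (simp add: restr_def aut_inv_apply[OF g] u)
  qed
  then have "bij_betw ?r (Vle d n) (Vle d n)"
    using gVle aut_inj[OF g] by (auto simp: bij_betw_def inj_on_def restr_def)
  then show ?thesis
    unfolding carrier_AutTn_iff is_aut_on_def using aut_length[OF g] aut_prefix[OF g]
    by (auto simp: restr_def Vle_def)
qed

lemma restr_mult:
  assumes g: "g \<in> carrier (AutT d)"
  shows "restr d n (g \<otimes>\<^bsub>AutT d\<^esub> k) = restr d n g \<otimes>\<^bsub>AutTn d n\<^esub> restr d n k"
proof -
  have "w \<in> Vle d n \<Longrightarrow> g w \<in> Vle d n" for w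
    using aut_in_V[OF g] aut_length[OF g] by (auto simp: Vle_def)
  then show ?thesis by (auto simp: restr_def AutT_mult AutTn_mult)
qed

interpretation restr: group_hom "AutT d" "AutTn d n" "restr d n" for d n
  by (simp add: group_hom.intro group_hom_axioms.intro AutT.is_group AutTn.is_group
      homI restr_carrier restr_mult)

lemma restr_id: "restr d n id = id"
  by (simp add: restr_def fun_eq_iff)

lemma sec_restr_eq_id:
  assumes g: "g \<in> carrier (AutT d)" and x: "x \<in> V d" and "restr d (length x + m) g = id"
  shows "restr d m (sec d g x) = id"
  unfolding restr_eq_id_iff
proof
  fix u assume u: "u \<in> Vle d m"
  have fix_g: "w \<in> Vle d (length x + m) \<Longrightarrow> g w = w" for w using assms(3) restr_eq_id_iff by blast
  have "g (x @ u) = x @ u" "g x = x" using u x by (auto intro!: fix_g simp: Vle_def)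
  then show "sec d g x u = u" using aut_append[OF g x, of u] u by (simp add: Vle_def)
qed

section \<open>Groups of finite type\<close>

lemma GP_subset_carrier: "GP d D P \<subseteq> carrier (AutT d)"
  by (auto simp: GP_def)

lemma subgroup_GP: assumes P: "subgroup P (AutTn d D)" shows "subgroup (GP d D P) (AutT d)"
proof (rule AutT.subgroupI)
  show "GP d D P \<subseteq> carrier (AutT d)" by (rule GP_subset_carrier)
  show "GP d D P \<noteq> {}"
    using subgroup.one_closed[OF P] AutT.one_closed
    by (auto simp: GP_def secn_def sec_id restr_id AutT_one AutTn_one)
next
  fix g assume g: "g \<in> GP d D P"
  then have gC: "g \<in> carrier (AutT d)" by (auto simp: GP_def)
  have "secn d D (inv\<^bsub>AutT d\<^esub> g) v \<in> P" if v: "v \<in> V d" for v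
  proof -
    have iv: "(inv\<^bsub>AutT d\<^esub> g) v \<in> V d" using aut_in_V[OF AutT.inv_closed[OF gC] v] .
    have "secn d D (inv\<^bsub>AutT d\<^esub> g) v = inv\<^bsub>AutTn d D\<^esub> (secn d D g ((inv\<^bsub>AutT d\<^esub> g) v))"
      unfolding secn_def using sec_inv[OF gC v] restr.hom_inv[OF sec_carrier[OF gC iv]] by simp
    then show ?thesis using g iv subgroup.m_inv_closed[OF P] by (auto simp: GP_def)
  qed
  then show "inv\<^bsub>AutT d\<^esub> g \<in> GP d D P" using AutT.inv_closed[OF gC] by (simp add: GP_def)
next
  fix g k assume g: "g \<in> GP d D P" and k: "k \<in> GP d D P"
  then have gC: "g \<in> carrier (AutT d)" and kC: "k \<in> carrier (AutT d)" by (auto simp: GP_def)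
  have "secn d D (g \<otimes>\<^bsub>AutT d\<^esub> k) v \<in> P" if v: "v \<in> V d" for v
  proof -
    have gv: "g v \<in> V d" using aut_in_V[OF gC v] .
    have "secn d D (g \<otimes>\<^bsub>AutT d\<^esub> k) v = secn d D g v \<otimes>\<^bsub>AutTn d D\<^esub> secn d D k (g v)"
      unfolding secn_def using sec_mult[OF gC kC v] restr_mult[OF sec_carrier[OF gC v]] by simp
    then show ?thesis using g k v gv subgroup.m_closed[OF P] by (auto simp: GP_def)
  qed
  then show "g \<otimes>\<^bsub>AutT d\<^esub> k \<in> GP d D P" using AutT.m_closed[OF gC kC] by (simp add: GP_def)
qed

lemma sec_in_GP: assumes g: "g \<in> GP d D P" and x: "x \<in> V d" shows "sec d g x \<in> GP d D P"
proof -
  have gC: "g \<in> carrier (AutT d)" using g by (auto simp: GP_def)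
  then show ?thesis using g x sec_carrier[OF gC x] by (auto simp: GP_def secn_def sec_sec)
qed

section \<open>Lifting an automorphism below a vertex\<close>

definition lift :: "nat \<Rightarrow> nat list \<Rightarrow> (nat list \<Rightarrow> nat list) \<Rightarrow> (nat list \<Rightarrow> nat list)" where
  "lift d x k = (\<lambda>w. if w \<in> V d \<and> prefix x w then x @ k (drop (length x) w) else w)"

lemma lift_append: "x @ u \<in> V d \<Longrightarrow> lift d x k (x @ u) = x @ k u"
  by (simp add: lift_def)

lemma lift_outside: "\<not> prefix x w \<Longrightarrow> lift d x k w = w"
  by (simp add: lift_def)

lemma lift_carrier:
  assumes x: "x \<in> V d" and k: "k \<in> carrier (AutT d)"
  shows "lift d x k \<in> carrier (AutT d)"
proof -
  let ?l = "lift d x k"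
  have below: "prefix x w \<Longrightarrow> prefix x (?l w)" for w by (simp add: lift_def)
  have inj: "inj_on ?l (V d)"
  proof (rule inj_onI)
    fix u w assume u: "u \<in> V d" and w: "w \<in> V d" and e: "?l u = ?l w"
    show "u = w"
    proof (cases "prefix x u \<and> prefix x w")
      case True
      then obtain u' w' where "u = x @ u'" "w = x @ w'" by (auto simp: prefix_def)
      then show ?thesis using e u w aut_inj[OF k] by (simp add: lift_append)
    next
      case False
      then show ?thesis
        using e below[of u] below[of w] lift_outside[of x u] lift_outside[of x w] by metis
    qed
  qed
  have surj: "V d \<subseteq> ?l ` V d"
  proof
    fix w assume w: "w \<in> V d"
    show "w \<in> ?l ` V d"
    proof (cases "prefix x w")
      case True
      then obtain w' where w': "w = x @ w'" by (auto simp: prefix_def)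
      let ?u = "(inv\<^bsub>AutT d\<^esub> k) w'"
      have "x @ ?u \<in> V d" using aut_in_V[OF AutT.inv_closed[OF k]] x w w' by simp
      moreover have "?l (x @ ?u) = w"
        using calculation w' aut_inv_apply[OF k] by (simp add: lift_append)
      ultimately show ?thesis by (metis image_eqI)
    next
      case False
      then show ?thesis using w lift_outside[OF False] by (metis image_eqI)
    qed
  qed
  have pre: "prefix (?l u) (?l w)" if u: "u \<in> V d" and w: "w \<in> V d" and uw: "prefix u w" for u w
  proof (cases "prefix x u")
    case True
    then obtain u' w' where "u = x @ u'" "w = x @ w'"
      using uw by (metis prefix_def prefix_order.trans)
    then show ?thesis using u w uw aut_prefix[OF k] by (simp add: lift_append)
  next
    case False
    then have "prefix u x" if "prefix x w" using that uw prefix_same_cases by blast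
    then show ?thesis
      using uw below[of w] lift_outside[OF False] lift_outside[of x w] by (metis prefix_order.trans)
  qed
  have len: "length (?l w) = length w" if "w \<in> V d" for w
    using that aut_length[OF k] drop_in_V by (auto simp: lift_def dest: prefix_length_le)
  have "?l w \<in> V d" if "w \<in> V d" for w
    using that x aut_in_V[OF k] drop_in_V by (auto simp: lift_def)
  then have "?l ` V d = V d" using surj by blast
  moreover have "?l w = w" if "w \<notin> V d" for w using that by (simp add: lift_def)
  ultimately show ?thesis
    unfolding carrier_AutT_iff is_aut_on_def bij_betw_def using inj pre len by blast
qed

lemma sec_lift: assumes "k \<in> carrier (AutT d)" and "x \<in> V d" shows "sec d (lift d x k) x = k"
  using aut_outside[OF assms(1)] assms(2) by (auto simp: sec_def lift_def fun_eq_iff)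

lemma lift_mult:
  assumes k1: "k1 \<in> carrier (AutT d)" and x: "x \<in> V d"
  shows "lift d x (k1 \<otimes>\<^bsub>AutT d\<^esub> k2) = lift d x k1 \<otimes>\<^bsub>AutT d\<^esub> lift d x k2"
  using aut_in_V[OF k1] x by (auto simp: lift_def AutT_mult fun_eq_iff drop_in_V)

lemma lift_id: "lift d x id = id"
  by (auto simp: lift_def prefix_def fun_eq_iff)

context
  fixes d :: nat and r :: "nat list \<Rightarrow> nat list" and x :: "nat list"
  assumes r: "r \<in> carrier (AutT d)" and x: "x \<in> V d"
    and supp: "\<And>u. u \<in> V d \<Longrightarrow> \<not> prefix x u \<Longrightarrow> r u = u"
begin

lemma supported_below_fixes: "r x = x"
proof (rule ccontr)
  assume ne: "r x \<noteq> x"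
  then have "\<not> prefix x (r x)"
    using aut_length[OF r x] prefix_same_length_eq[of x "r x" "r x"] by auto
  then have "r (r x) = r x" using supp aut_in_V[OF r x] by blast
  then show False using ne aut_inj[OF r] by blast
qed

lemma supported_below_eq_lift: "r = lift d x (sec d r x)"
proof (rule ext)
  fix w
  show "r w = lift d x (sec d r x) w"
  proof (cases "w \<in> V d \<and> prefix x w")
    case True
    then obtain u where "w = x @ u" by (auto simp: prefix_def)
    then show ?thesis using aut_append[OF r x] supported_below_fixes True by (simp add: lift_append)
  qed (use supp aut_outside[OF r] in \<open>auto simp: lift_def\<close>)
qed

end

definition lift_prod ::
    "nat \<Rightarrow> nat list set \<Rightarrow> (nat list \<Rightarrow> nat list \<Rightarrow> nat list) \<Rightarrow> (nat list \<Rightarrow> nat list)" where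
  "lift_prod d S k =
     (\<lambda>w. if w \<in> V d \<and> w \<noteq> [] \<and> take 1 w \<in> S then take 1 w @ k (take 1 w) (drop 1 w) else w)"

lemma lift_prod_insert:
  assumes x: "x \<in> Lev d 1" "x \<notin> S" and S: "S \<subseteq> Lev d 1"
  shows "lift_prod d (insert x S) k = lift_prod d S k \<otimes>\<^bsub>AutT d\<^esub> lift d x (k x)"
proof (rule ext)
  fix w
  obtain a where xa: "x = [a]" using x by (auto simp: Lev_def length_Suc_conv)
  have S1: "y \<in> S \<Longrightarrow> \<exists>b. y = [b]" for y using S by (auto simp: Lev_def length_Suc_conv)
  show "lift_prod d (insert x S) k w = (lift_prod d S k \<otimes>\<^bsub>AutT d\<^esub> lift d x (k x)) w"
  proof (cases w)
    case (Cons b u)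
    then show ?thesis
      using x(2) S1 by (cases "b = a") (auto simp: lift_prod_def lift_def AutT_mult xa)
  qed (simp add: lift_prod_def lift_def AutT_mult xa)
qed

lemma lift_prod_in_subgroup:
  assumes "finite S" "S \<subseteq> Lev d 1" and K: "subgroup K (AutT d)"
    and lifts: "\<And>x. x \<in> S \<Longrightarrow> lift d x (k x) \<in> K"
  shows "lift_prod d S k \<in> K"
  using assms(1,2) lifts
proof (induction S rule: finite_induct)
  case empty
  have "lift_prod d {} k = \<one>\<^bsub>AutT d\<^esub>" by (simp add: lift_prod_def AutT_one fun_eq_iff)
  then show ?case using subgroup.one_closed[OF K] by simp
next
  case (insert x S)
  then show ?case using lift_prod_insert[of x d S k] subgroup.m_closed[OF K] by simp
qed

lemma restr_Suc_lift_prod: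
  assumes g: "g \<in> carrier (AutT d)" and fix1: "\<And>x. x \<in> Lev d 1 \<Longrightarrow> g x = x"
    and k: "\<And>x. x \<in> Lev d 1 \<Longrightarrow> restr d n (k x) = restr d n (sec d g x)"
  shows "restr d (Suc n) (lift_prod d (Lev d 1) k) = restr d (Suc n) g"
  unfolding restr_eq_iff
proof
  fix w assume w: "w \<in> Vle d (Suc n)"
  show "lift_prod d (Lev d 1) k w = g w"
  proof (cases w)
    case Nil
    then show ?thesis using aut_length[OF g, of "[]"] by (simp add: lift_prod_def)
  next
    case (Cons a u)
    have a: "[a] \<in> Lev d 1" and u: "u \<in> Vle d n" using w Cons by (auto simp: Lev_def Vle_def V_def)
    have "g w = [a] @ sec d g [a] u"
      using aut_append[OF g, of "[a]" u] fix1[OF a] a u Cons by (simp add: Lev_def Vle_def)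
    also have "sec d g [a] u = k [a] u" using k[OF a] u restr_eq_iff by metis
    finally show ?thesis using w a Cons by (simp add: lift_prod_def Vle_def)
  qed
qed

section \<open>The group \<open>G\<^sub>H\<close>\<close>

locale self_similar_normal_pair =
  fixes d :: nat and G H :: "(nat list \<Rightarrow> nat list) set"
  assumes subgroup_G: "subgroup G (AutT d)" and subgroup_H: "subgroup H (AutT d)"
    and H_subset_G: "H \<subseteq> G"
    and H_normal: "\<And>x h. x \<in> G \<Longrightarrow> h \<in> H \<Longrightarrow> x \<otimes>\<^bsub>AutT d\<^esub> h \<otimes>\<^bsub>AutT d\<^esub> inv\<^bsub>AutT d\<^esub> x \<in> H"
    and sec_in_G: "\<And>g v. g \<in> G \<Longrightarrow> v \<in> V d \<Longrightarrow> sec d g v \<in> G"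
    and sec_in_H: "\<And>h v. h \<in> H \<Longrightarrow> v \<in> V d \<Longrightarrow> sec d h v \<in> H"
begin

lemma G_subset_carrier: "G \<subseteq> carrier (AutT d)"
  using subgroup_G subgroup.subset by blast

lemma H_subset_carrier: "H \<subseteq> carrier (AutT d)"
  using subgroup_H subgroup.subset by blast

lemma GH_subset_G: "GH d G H \<subseteq> G"
  by (auto simp: GH_def)

lemma GH_subset_carrier: "GH d G H \<subseteq> carrier (AutT d)"
  using GH_subset_G G_subset_carrier by blast

lemma GH_sec_quotient:
  "g \<in> GH d G H \<Longrightarrow> v \<in> V d \<Longrightarrow> w \<in> V d \<Longrightarrow> sec d g v \<otimes>\<^bsub>AutT d\<^esub> inv\<^bsub>AutT d\<^esub> sec d g w \<in> H"
  by (auto simp: GH_def)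

lemma H_subset_GH: "H \<subseteq> GH d G H"
  using H_subset_G sec_in_H subgroup.m_closed[OF subgroup_H] subgroup.m_inv_closed[OF subgroup_H]
  by (auto simp: GH_def)

lemma subgroup_GH: "subgroup (GH d G H) (AutT d)"
proof (rule AutT.subgroupI)
  show "GH d G H \<subseteq> carrier (AutT d)" by (rule GH_subset_carrier)
  show "GH d G H \<noteq> {}" using H_subset_GH subgroup.one_closed[OF subgroup_H] by blast
next
  fix g assume g: "g \<in> GH d G H"
  have gG: "g \<in> G" and gC: "g \<in> carrier (AutT d)" using g GH_subset_G G_subset_carrier by auto
  let ?i = "inv\<^bsub>AutT d\<^esub> g"
  have iC: "?i \<in> carrier (AutT d)" using AutT.inv_closed[OF gC] .
  have "sec d ?i v \<otimes>\<^bsub>AutT d\<^esub> inv\<^bsub>AutT d\<^esub> sec d ?i w \<in> H" if v: "v \<in> V d" and w: "w \<in> V d" for v w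
  proof -
    let ?a = "sec d g (?i v)" and ?b = "sec d g (?i w)"
    have iv: "?i v \<in> V d" and iw: "?i w \<in> V d" using aut_in_V[OF iC] v w by auto
    have aG: "?a \<in> G" and bC: "?b \<in> carrier (AutT d)" 
      using sec_in_G[OF gG iv] sec_carrier[OF gC iw] .
    have aC: "?a \<in> carrier (AutT d)" using aG G_subset_carrier by blast
    have "inv\<^bsub>AutT d\<^esub> (?a \<otimes>\<^bsub>AutT d\<^esub> inv\<^bsub>AutT d\<^esub> ?b) \<in> H"
      using subgroup.m_inv_closed[OF subgroup_H GH_sec_quotient[OF g iv iw]] .
    then have "inv\<^bsub>AutT d\<^esub> ?a \<otimes>\<^bsub>AutT d\<^esub> inv\<^bsub>AutT d\<^esub> (?a \<otimes>\<^bsub>AutT d\<^esub> inv\<^bsub>AutT d\<^esub> ?b)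
        \<otimes>\<^bsub>AutT d\<^esub> inv\<^bsub>AutT d\<^esub> (inv\<^bsub>AutT d\<^esub> ?a) \<in> H"
      using H_normal subgroup.m_inv_closed[OF subgroup_G aG] by blast
    moreover have "inv\<^bsub>AutT d\<^esub> ?a \<otimes>\<^bsub>AutT d\<^esub> inv\<^bsub>AutT d\<^esub> (?a \<otimes>\<^bsub>AutT d\<^esub> inv\<^bsub>AutT d\<^esub> ?b)
        \<otimes>\<^bsub>AutT d\<^esub> inv\<^bsub>AutT d\<^esub> (inv\<^bsub>AutT d\<^esub> ?a) = inv\<^bsub>AutT d\<^esub> ?a \<otimes>\<^bsub>AutT d\<^esub> ?b"
      using aC bC by (simp add: AutT.inv_mult_group AutT.m_assoc)
    ultimately show ?thesis using sec_inv[OF gC v] sec_inv[OF gC w] bC by simp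
  qed
  then show "?i \<in> GH d G H" using subgroup.m_inv_closed[OF subgroup_G gG] by (simp add: GH_def)
next
  fix g k assume g: "g \<in> GH d G H" and k: "k \<in> GH d G H"
  have gG: "g \<in> G" and gC: "g \<in> carrier (AutT d)" and kG: "k \<in> G" and kC: "k \<in> carrier (AutT d)"
    using g k GH_subset_G G_subset_carrier by auto
  have "sec d (g \<otimes>\<^bsub>AutT d\<^esub> k) v \<otimes>\<^bsub>AutT d\<^esub> inv\<^bsub>AutT d\<^esub> sec d (g \<otimes>\<^bsub>AutT d\<^esub> k) w \<in> H"
    if v: "v \<in> V d" and w: "w \<in> V d" for v w
  proof -
    let ?a = "sec d g v" and ?b = "sec d g w" and ?c = "sec d k (g v)" and ?e = "sec d k (g w)"
    have gv: "g v \<in> V d" and gw: "g w \<in> V d" using aut_in_V[OF gC] v w by auto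
    have aG: "?a \<in> G" using sec_in_G[OF gG v] .
    have C: "?a \<in> carrier (AutT d)" "?b \<in> carrier (AutT d)"
        "?c \<in> carrier (AutT d)" "?e \<in> carrier (AutT d)"
      using sec_carrier gC kC v w gv gw by auto
    have "(?a \<otimes>\<^bsub>AutT d\<^esub> (?c \<otimes>\<^bsub>AutT d\<^esub> inv\<^bsub>AutT d\<^esub> ?e) \<otimes>\<^bsub>AutT d\<^esub> inv\<^bsub>AutT d\<^esub> ?a)
        \<otimes>\<^bsub>AutT d\<^esub> (?a \<otimes>\<^bsub>AutT d\<^esub> inv\<^bsub>AutT d\<^esub> ?b) \<in> H"
      using H_normal[OF aG GH_sec_quotient[OF k gv gw]] GH_sec_quotient[OF g v w]
      by (rule subgroup.m_closed[OF subgroup_H])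
    moreover have "(?a \<otimes>\<^bsub>AutT d\<^esub> (?c \<otimes>\<^bsub>AutT d\<^esub> inv\<^bsub>AutT d\<^esub> ?e) \<otimes>\<^bsub>AutT d\<^esub> inv\<^bsub>AutT d\<^esub> ?a)
        \<otimes>\<^bsub>AutT d\<^esub> (?a \<otimes>\<^bsub>AutT d\<^esub> inv\<^bsub>AutT d\<^esub> ?b)
      = (?a \<otimes>\<^bsub>AutT d\<^esub> ?c) \<otimes>\<^bsub>AutT d\<^esub> inv\<^bsub>AutT d\<^esub> (?b \<otimes>\<^bsub>AutT d\<^esub> ?e)"
      using C
      by (simp add: AutT.inv_mult_group AutT.m_assoc AutT.m_assoc[symmetric, of "inv\<^bsub>AutT d\<^esub> ?a"])
    ultimately show ?thesis using sec_mult[OF gC kC v] sec_mult[OF gC kC w] by simp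
  qed
  then show "g \<otimes>\<^bsub>AutT d\<^esub> k \<in> GH d G H"
    using subgroup.m_closed[OF subgroup_G gG kG] by (simp add: GH_def)
qed

text \<open>Each section \<open>f|\<^sub>v\<close> lies in \<open>H f\<close> and \<open>\<pi>\<^sub>D(f) = 1\<close>, so \<open>f|\<^sub>v\<^sup>D\<close> is the depth-\<open>D\<close> root section
  of an element of \<open>H = G\<^sub>P\<close>, hence lies in \<open>P\<close>.\<close>

lemma GH_restr_id_imp_mem:
  assumes HP: "H = GP d D P" and f: "f \<in> GH d G H" and rf: "restr d D f = id"
  shows "f \<in> H"
proof -
  have fC: "f \<in> carrier (AutT d)" using f GH_subset_carrier by blast
  have "secn d D f v \<in> P" if v: "v \<in> V d" for v
  proof -
    define a where "a = sec d f v \<otimes>\<^bsub>AutT d\<^esub> inv\<^bsub>AutT d\<^esub> sec d f []"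
    have aH: "a \<in> H" unfolding a_def using GH_sec_quotient[OF f v] by simp
    have aC: "a \<in> carrier (AutT d)" using aH H_subset_carrier by blast
    have "sec d f v = a \<otimes>\<^bsub>AutT d\<^esub> f"
      unfolding a_def using sec_carrier[OF fC v] fC by (simp add: sec_Nil[OF fC] AutT.m_assoc)
    then have "secn d D f v = restr d D a \<otimes>\<^bsub>AutTn d D\<^esub> restr d D f"
      unfolding secn_def using restr_mult[OF aC] by simp
    also have "\<dots> = secn d D a []" by (simp add: rf secn_def sec_Nil[OF aC] AutTn_mult)
    also have "\<dots> \<in> P" using aH HP by (auto simp: GP_def)
    finally show ?thesis .
  qed
  then show ?thesis using HP fC by (simp add: GP_def)
qed

lemma finite_card_cosets_GH:
  assumes "H = GP d D P"
  shows "finite (cosets_in (AutT d) (GH d G H) H) \<and>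
    card (cosets_in (AutT d) (GH d G H) H) =
      card (cosets_in (AutTn d D) (restr d D ` GH d G H) (restr d D ` H))"
  using group_hom.finite_card_cosets_in_image[OF restr.group_hom_axioms[of d D]
      subgroup_GH subgroup_H H_subset_GH _ finite_carrier_AutTn]
    GH_restr_id_imp_mem[OF assms] by (simp add: AutTn_one)

end

section \<open>Closed subgroups of finite index\<close>

lemma closed_cong_separates:
  assumes K: "subgroup K (AutT d)" and closed: "closed_cong d K"
    and r: "r \<in> carrier (AutT d)" "r \<notin> K"
  shows "\<exists>M. \<forall>k\<in>K. restr d M (k \<otimes>\<^bsub>AutT d\<^esub> r) \<noteq> id"
proof (rule ccontr)
  assume "\<not> ?thesis"
  then have meets: "\<exists>k\<in>K. restr d M (k \<otimes>\<^bsub>AutT d\<^esub> r) = id" for M by blast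
  have "\<exists>k\<in>K. restr d M k = restr d M (inv\<^bsub>AutT d\<^esub> r)" for M
  proof -
    obtain k where k: "k \<in> K" and "restr d M (k \<otimes>\<^bsub>AutT d\<^esub> r) = id" using meets by blast
    moreover have kC: "k \<in> carrier (AutT d)" using k K subgroup.subset by blast
    ultimately have "restr d M k \<otimes>\<^bsub>AutTn d M\<^esub> restr d M r = \<one>\<^bsub>AutTn d M\<^esub>"
      using restr_mult[OF kC] by (simp add: AutTn_one)
    then have "restr d M k = restr d M (inv\<^bsub>AutT d\<^esub> r)"
      using AutTn.inv_equality[symmetric] restr_carrier kC r(1) restr.hom_inv by metis
    then show ?thesis using k by blast
  qed
  then have "inv\<^bsub>AutT d\<^esub> r \<in> K" using closed AutT.inv_closed[OF r(1)] by (auto simp: closed_cong_def)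
  then show False using subgroup.m_inv_closed[OF K] AutT.inv_inv[OF r(1)] r(2) by metis
qed

lemma closed_finite_index_contains_stabilizer:
  assumes K: "subgroup K (AutT d)" and closed: "closed_cong d K" and "K \<subseteq> H"
    and H: "H \<subseteq> carrier (AutT d)" and fin: "finite (cosets_in (AutT d) H K)"
  obtains M where "\<And>h. h \<in> H \<Longrightarrow> restr d M h = id \<Longrightarrow> h \<in> K"
proof -
  obtain R where R: "finite R" "R \<subseteq> H"
    and cover: "\<And>a. a \<in> H \<Longrightarrow> \<exists>r\<in>R. \<exists>k\<in>K. a = k \<otimes>\<^bsub>AutT d\<^esub> r"
    using AutT.finite_rcoset_representatives[OF K H] fin unfolding cosets_in_eq by blast
  have "\<exists>M. \<forall>k\<in>K. restr d M (k \<otimes>\<^bsub>AutT d\<^esub> r) \<noteq> id" if "r \<in> R - K" for r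
  proof -
    have "r \<in> carrier (AutT d)" "r \<notin> K" using that R(2) H by auto
    then show ?thesis by (rule closed_cong_separates[OF K closed])
  qed
  then obtain Mr where Mr: "\<And>r k. r \<in> R - K \<Longrightarrow> k \<in> K \<Longrightarrow> restr d (Mr r) (k \<otimes>\<^bsub>AutT d\<^esub> r) \<noteq> id"
    by metis
  show ?thesis
  proof (rule that)
    fix h assume h: "h \<in> H" and triv: "restr d (Max (Mr ` (R - K))) h = id"
    obtain r k where r: "r \<in> R" and k: "k \<in> K" and hkr: "h = k \<otimes>\<^bsub>AutT d\<^esub> r" using cover[OF h] by blast
    show "h \<in> K"
    proof (cases "r \<in> K")
      case True
      then show ?thesis using hkr k subgroup.m_closed[OF K] by blast
    next
      case False
      then have "restr d (Mr r) h = id"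
        using triv R(1) r by (intro restr_id_mono[OF triv]) simp
      then show ?thesis using Mr[of r k] False r k hkr by blast
    qed
  qed
qed

lemma Rist_mono: "H \<subseteq> K \<Longrightarrow> Rist d H n \<subseteq> Rist d K n"
  unfolding Rist_def by (rule AutT.mono_generate) (auto simp: rist_def)

lemma subgroup_Rist: "H \<subseteq> carrier (AutT d) \<Longrightarrow> subgroup (Rist d H n) (AutT d)"
  unfolding Rist_def by (rule AutT.generate_is_subgroup) (auto simp: rist_def)

lemma level_transitive_mono: "level_transitive d H \<Longrightarrow> H \<subseteq> K \<Longrightarrow> level_transitive d K"
  unfolding level_transitive_def by blast

text \<open>Since \<open>Rist\<^sub>H(n) \<le> Rist\<^sub>K(n)\<close>, finite index passes from \<open>H\<close> up to \<open>K\<close>.\<close>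

lemma branch_if_finite_index_branch_subgroup:
  assumes K: "subgroup K (AutT d)" and H: "subgroup H (AutT d)" and "H \<subseteq> K"
    and branch: "branch d H" and fin: "finite (cosets_in (AutT d) K H)"
  shows "branch d K"
  unfolding branch_def
proof (intro conjI allI)
  have "level_transitive d H" using branch by (simp add: branch_def)
  then show "level_transitive d K" using level_transitive_mono \<open>H \<subseteq> K\<close> by blast
  fix n
  have HC: "H \<subseteq> carrier (AutT d)" and KC: "K \<subseteq> carrier (AutT d)"
    using H K subgroup.subset by blast+
  have "finite (cosets_in (AutT d) H (Rist d H n))" using branch by (simp add: branch_def)
  then show "finite (cosets_in (AutT d) K (Rist d K n))"
    using fin unfolding cosets_in_eq
    by (rule AutT.finite_index_trans[OF H subgroup_Rist[OF KC] subgroup_Rist[OF HC]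
          Rist_mono[OF \<open>H \<subseteq> K\<close>] KC, rotated])
qed

section \<open>Closed fractal branch groups are of finite type\<close>

lemma restr_lift_eq:
  assumes "restr d n k = restr d n g"
  shows "restr d n (lift d x k) = restr d n (lift d x g)"
  unfolding restr_eq_iff
proof
  fix w assume w: "w \<in> Vle d n"
  then have "drop (length x) w \<in> Vle d n" using drop_in_V by (auto simp: Vle_def)
  then show "lift d x k w = lift d x g w" using assms restr_eq_iff by (auto simp: lift_def)
qed

definition rist_sec ::
    "nat \<Rightarrow> (nat list \<Rightarrow> nat list) set \<Rightarrow> nat list \<Rightarrow> (nat list \<Rightarrow> nat list) set" where
  "rist_sec d H x = {k \<in> carrier (AutT d). lift d x k \<in> H}"

locale closed_fractal_branch =
  fixes d :: nat and H :: "(nat list \<Rightarrow> nat list) set"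
  assumes subgroup_H: "subgroup H (AutT d)" and closed_H: "closed_cong d H"
    and fractal_H: "fractal d H" and branch_H: "branch d H"
begin

lemma H_subset_carrier: "H \<subseteq> carrier (AutT d)"
  using subgroup_H subgroup.subset by blast

lemma sec_in_H: "h \<in> H \<Longrightarrow> v \<in> V d \<Longrightarrow> sec d h v \<in> H"
  using fractal_H by (auto simp: fractal_def)

lemma rist_level:
  assumes h: "h \<in> rist d H y" and y: "y \<in> Lev d n" and x: "x \<in> Lev d n"
  shows "h x = x \<and> lift d x (sec d h x) \<in> H"
proof -
  have hH: "h \<in> H" and supp: "\<And>u. u \<in> V d \<Longrightarrow> \<not> prefix y u \<Longrightarrow> h u = u"
    using h by (auto simp: rist_def)
  have hC: "h \<in> carrier (AutT d)" using hH H_subset_carrier by blast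
  have xV: "x \<in> V d" and yV: "y \<in> V d" using x y Lev_subset_V by auto
  show ?thesis
  proof (cases "x = y")
    case True
    then show ?thesis
      using supported_below_fixes[OF hC yV supp] supported_below_eq_lift[OF hC yV supp] hH by simp
  next
    case False
    have "\<not> prefix y (x @ u)" for u
      using prefix_same_length_eq[of y "x @ u" x] False x y by (auto simp: Lev_def)
    then have fix_below: "h (x @ u) = x @ u" if "u \<in> V d" for u
      using supp that xV by simp
    then have "h x = x" and "sec d h x = id"
      by (metis Nil_in_V append_Nil2) (auto simp: sec_def fun_eq_iff fix_below)
    then show ?thesis using lift_id subgroup.one_closed[OF subgroup_H] by (simp add: AutT_one)
  qed
qed

lemma Rist_level:
  assumes "r \<in> Rist d H n" and x: "x \<in> Lev d n"
  shows "r x = x \<and> lift d x (sec d r x) \<in> H"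
  using assms(1) unfolding Rist_def
proof (induction rule: generate.induct)
  case one
  have "lift d x (sec d id x) = id" by (simp only: sec_id lift_id)
  then show ?case using subgroup.one_closed[OF subgroup_H] unfolding AutT_one by (simp add: id_def)
next
  case (incl h)
  then show ?case using rist_level x by blast
next
  case (inv h)
  then obtain y where y: "y \<in> Lev d n" and h: "h \<in> rist d H y" by blast
  have hC: "h \<in> carrier (AutT d)" using h H_subset_carrier by (auto simp: rist_def)
  have "inv\<^bsub>AutT d\<^esub> h \<in> rist d H y"
    using h subgroup.m_inv_closed[OF subgroup_H] inv_aut_apply[OF hC] by (auto simp: rist_def) metis
  then show ?case using rist_level y x by blast
next
  case (eng h1 h2)
  have "(\<Union>v\<in>Lev d n. rist d H v) \<subseteq> carrier (AutT d)"
    using H_subset_carrier by (auto simp: rist_def)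
  then have C: "h1 \<in> carrier (AutT d)" "h2 \<in> carrier (AutT d)"
    using AutT.generate_in_carrier eng.hyps by blast+
  have xV: "x \<in> V d" using x Lev_subset_V by blast
  have fix1: "h1 x = x" and fix2: "h2 x = x" using eng.IH by auto
  have "lift d x (sec d (h1 \<otimes>\<^bsub>AutT d\<^esub> h2) x) = lift d x (sec d h1 x) \<otimes>\<^bsub>AutT d\<^esub> lift d x (sec d h2 x)"
    using sec_mult[OF C xV] fix1 lift_mult[OF sec_carrier[OF C(1) xV] xV] by simp
  also have "\<dots> \<in> H" using eng.IH subgroup.m_closed[OF subgroup_H] by blast
  finally have "lift d x (sec d (h1 \<otimes>\<^bsub>AutT d\<^esub> h2) x) \<in> H" .
  moreover have "(h1 \<otimes>\<^bsub>AutT d\<^esub> h2) x = x" using fix1 fix2 by (simp add: AutT_mult)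
  ultimately show ?case by blast
qed

lemma subgroup_rist_sec: assumes x: "x \<in> V d" shows "subgroup (rist_sec d H x) (AutT d)"
proof (rule AutT.subgroupI)
  show "rist_sec d H x \<subseteq> carrier (AutT d)" by (auto simp: rist_sec_def)
  show "rist_sec d H x \<noteq> {}"
    using subgroup.one_closed[OF subgroup_H] AutT.one_closed lift_id
    by (auto simp: rist_sec_def AutT_one)
next
  fix k assume "k \<in> rist_sec d H x"
  then have k: "k \<in> carrier (AutT d)" and "lift d x k \<in> H" by (auto simp: rist_sec_def)
  have i: "inv\<^bsub>AutT d\<^esub> k \<in> carrier (AutT d)" using AutT.inv_closed[OF k] .
  have "lift d x (inv\<^bsub>AutT d\<^esub> k) \<otimes>\<^bsub>AutT d\<^esub> lift d x k = lift d x (inv\<^bsub>AutT d\<^esub> k \<otimes>\<^bsub>AutT d\<^esub> k)"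
    using lift_mult[OF i x] by simp
  also have "\<dots> = \<one>\<^bsub>AutT d\<^esub>" using AutT.l_inv[OF k] lift_id by (simp add: AutT_one)
  finally have "lift d x (inv\<^bsub>AutT d\<^esub> k) = inv\<^bsub>AutT d\<^esub> (lift d x k)"
    using AutT.inv_equality[symmetric] lift_carrier[OF x k] lift_carrier[OF x i] by blast
  then show "inv\<^bsub>AutT d\<^esub> k \<in> rist_sec d H x"
    using i subgroup.m_inv_closed[OF subgroup_H \<open>lift d x k \<in> H\<close>] by (simp add: rist_sec_def)
next
  fix k1 k2 assume "k1 \<in> rist_sec d H x" "k2 \<in> rist_sec d H x"
  then show "k1 \<otimes>\<^bsub>AutT d\<^esub> k2 \<in> rist_sec d H x"
    using lift_mult[OF _ x] subgroup.m_closed[OF subgroup_H] AutT.m_closed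
    by (simp add: rist_sec_def)
qed

lemma rist_sec_subset: assumes x: "x \<in> V d" shows "rist_sec d H x \<subseteq> H"
proof
  fix k assume "k \<in> rist_sec d H x"
  then have "k \<in> carrier (AutT d)" and "lift d x k \<in> H" by (auto simp: rist_sec_def)
  then show "k \<in> H" using sec_in_H[OF _ x] sec_lift[OF _ x] by metis
qed

lemma closed_rist_sec: assumes x: "x \<in> V d" shows "closed_cong d (rist_sec d H x)"
  unfolding closed_cong_def
proof (intro ballI impI)
  fix g assume g: "g \<in> carrier (AutT d)"
    and approx: "\<forall>n. \<exists>k\<in>rist_sec d H x. restr d n k = restr d n g"
  have "\<exists>h\<in>H. restr d n h = restr d n (lift d x g)" for n
  proof -
    obtain k where "k \<in> rist_sec d H x" and "restr d n k = restr d n g" using approx by blast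
    then show ?thesis using restr_lift_eq[of d n k g x] by (auto simp: rist_sec_def)
  qed
  then have "lift d x g \<in> H" using closed_H lift_carrier[OF x g] by (auto simp: closed_cong_def)
  then show "g \<in> rist_sec d H x" using g by (simp add: rist_sec_def)
qed

text \<open>Every \<open>k \<in> H\<close> is a section \<open>g|\<^sub>x\<close> with \<open>g \<in> H\<close> fixing \<open>x\<close> (fractality); writing
  \<open>g = \<rho> r\<close> with \<open>\<rho> \<in> Rist\<^sub>H(n)\<close> and \<open>r\<close> from a finite transversal gives \<open>k \<in> rist_sec d H x \<cdot> r|\<^sub>x\<close>.\<close>

lemma finite_index_rist_sec:
  assumes x: "x \<in> Lev d n"
  shows "finite (cosets_in (AutT d) H (rist_sec d H x))"
proof -
  have xV: "x \<in> V d" using x Lev_subset_V by blast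
  let ?L = "rist_sec d H x"
  obtain R where R: "finite R" "R \<subseteq> H"
    and cover: "\<And>a. a \<in> H \<Longrightarrow> \<exists>r\<in>R. \<exists>\<rho>\<in>Rist d H n. a = \<rho> \<otimes>\<^bsub>AutT d\<^esub> r"
    using AutT.finite_rcoset_representatives[OF subgroup_Rist[OF H_subset_carrier] H_subset_carrier]
      branch_H unfolding branch_def cosets_in_eq by blast
  have "(\<lambda>k. ?L #>\<^bsub>AutT d\<^esub> k) ` H \<subseteq> (\<lambda>r. ?L #>\<^bsub>AutT d\<^esub> sec d r x) ` R"
  proof
    fix c assume "c \<in> (\<lambda>k. ?L #>\<^bsub>AutT d\<^esub> k) ` H"
    then obtain k where k: "k \<in> H" and c: "c = ?L #>\<^bsub>AutT d\<^esub> k" by blast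
    obtain g where g: "g \<in> H" "g x = x" and kg: "k = sec d g x"
      using fractal_H xV k unfolding fractal_def by blast
    obtain r \<rho> where r: "r \<in> R" and \<rho>: "\<rho> \<in> Rist d H n" and g\<rho>: "g = \<rho> \<otimes>\<^bsub>AutT d\<^esub> r"
      using cover[OF g(1)] by blast
    have \<rho>H: "\<rho> x = x" "lift d x (sec d \<rho> x) \<in> H" using Rist_level[OF \<rho> x] by auto
    have \<rho>C: "\<rho> \<in> carrier (AutT d)" and rC: "r \<in> carrier (AutT d)"
      using subgroup.subset[OF subgroup_Rist[OF H_subset_carrier]] \<rho> r R H_subset_carrier by auto
    have "k = sec d \<rho> x \<otimes>\<^bsub>AutT d\<^esub> sec d r x" using kg g\<rho> sec_mult[OF \<rho>C rC xV] \<rho>H by simp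
    moreover have "sec d \<rho> x \<in> ?L" using \<rho>H sec_carrier[OF \<rho>C xV] by (simp add: rist_sec_def)
    ultimately have "k \<in> ?L #>\<^bsub>AutT d\<^esub> sec d r x" unfolding r_coset_def by blast
    then have "?L #>\<^bsub>AutT d\<^esub> sec d r x = c"
      using c AutT.repr_independence[OF _ sec_carrier[OF rC xV] subgroup_rist_sec[OF xV]] by blast
    then show "c \<in> (\<lambda>r. ?L #>\<^bsub>AutT d\<^esub> sec d r x) ` R" using r by blast
  qed
  then show ?thesis using R(1) finite_subset unfolding cosets_in_eq by blast
qed

lemma lift_stabilizer:
  obtains M where "\<And>x h. x \<in> Lev d n \<Longrightarrow> h \<in> H \<Longrightarrow> restr d M h = id \<Longrightarrow> lift d x h \<in> H"
proof -
  have "\<forall>x\<in>Lev d n. \<exists>M. \<forall>h\<in>H. restr d M h = id \<longrightarrow> lift d x h \<in> H"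
  proof
    fix x assume x: "x \<in> Lev d n"
    have xV: "x \<in> V d" using x Lev_subset_V by blast
    obtain M where "\<And>h. h \<in> H \<Longrightarrow> restr d M h = id \<Longrightarrow> h \<in> rist_sec d H x"
      using closed_finite_index_contains_stabilizer[OF subgroup_rist_sec[OF xV]
          closed_rist_sec[OF xV] rist_sec_subset[OF xV] H_subset_carrier finite_index_rist_sec[OF x]]
      by blast
    then show "\<exists>M. \<forall>h\<in>H. restr d M h = id \<longrightarrow> lift d x h \<in> H" by (auto simp: rist_sec_def)
  qed
  then obtain Mx where Mx: "\<forall>x\<in>Lev d n. \<forall>h\<in>H. restr d (Mx x) h = id \<longrightarrow> lift d x h \<in> H"
    by (rule bchoice[elim_format]) blast
  show ?thesis
  proof (rule that)
    fix x h assume x: "x \<in> Lev d n" and h: "h \<in> H" and triv: "restr d (Max (Mx ` Lev d n)) h = id"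
    have "Mx x \<le> Max (Mx ` Lev d n)" using x finite_Lev by simp
    then have "restr d (Mx x) h = id" by (rule restr_id_mono[OF triv])
    then show "lift d x h \<in> H" using Mx x h by blast
  qed
qed

lemma H_subset_GP_restr: "H \<subseteq> GP d D (restr d D ` H)"
  using sec_in_H H_subset_carrier by (auto simp: GP_def secn_def)

lemma GP_restr_eq:
  assumes g: "g \<in> GP d D (restr d D ` H)"
  shows "\<exists>h\<in>H. restr d D h = restr d D g"
proof -
  have "g \<in> carrier (AutT d)" using g GP_subset_carrier by blast
  then have "secn d D g [] = restr d D g" by (simp add: secn_def sec_Nil)
  moreover have "secn d D g [] \<in> restr d D ` H" using g Nil_in_V[of d] unfolding GP_def by blast
  ultimately have "restr d D g \<in> restr d D ` H" by simp
  then show ?thesis by (auto simp: image_iff)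
qed

lemma GP_decompose:
  assumes g: "g \<in> GP d D (restr d D ` H)"
  obtains g' h0 where "g' \<in> GP d D (restr d D ` H)" "restr d D g' = id" "h0 \<in> H"
    "g = g' \<otimes>\<^bsub>AutT d\<^esub> h0"
proof -
  let ?P = "restr d D ` H"
  obtain h0 where h0: "h0 \<in> H" and rh0: "restr d D h0 = restr d D g"
    using GP_restr_eq[OF g] by blast
  have P: "subgroup ?P (AutTn d D)" using restr.subgroup_img_is_subgroup[OF subgroup_H] .
  have "g \<otimes>\<^bsub>AutT d\<^esub> inv\<^bsub>AutT d\<^esub> h0 \<in> GP d D ?P"
    using g h0 H_subset_GP_restr subgroup_GP[OF P]
    by (simp add: subgroup.m_closed subgroup.m_inv_closed subset_iff)
  moreover have gC: "g \<in> carrier (AutT d)" using g GP_subset_carrier by blast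
  moreover have h0C: "h0 \<in> carrier (AutT d)" using h0 H_subset_carrier by blast
  moreover have "restr d D (g \<otimes>\<^bsub>AutT d\<^esub> inv\<^bsub>AutT d\<^esub> h0)
      = restr d D g \<otimes>\<^bsub>AutTn d D\<^esub> inv\<^bsub>AutTn d D\<^esub> restr d D h0"
    using restr_mult[OF gC] restr.hom_inv[OF h0C] by simp
  ultimately show ?thesis
    using that[of "g \<otimes>\<^bsub>AutT d\<^esub> inv\<^bsub>AutT d\<^esub> h0" h0] h0 rh0 AutTn.r_inv[OF restr_carrier[OF gC]]
    by (simp add: AutTn_one AutT.m_assoc)
qed

text \<open>An element trivial on \<open>T\<^sup>D\<close> whose first-level sections are approximated by \<open>H\<close> is
  itself approximated one level deeper: the approximants are trivial on \<open>T\<^sup>M\<close>, so they lift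
  back into \<open>H\<close>.\<close>

lemma stabilizer_restr_Suc_approx:
  assumes lift_M: "\<And>x h. x \<in> Lev d 1 \<Longrightarrow> h \<in> H \<Longrightarrow> restr d M h = id \<Longrightarrow> lift d x h \<in> H"
    and "M < D" "M \<le> n" and g: "g \<in> carrier (AutT d)" and triv: "restr d D g = id"
    and approx: "\<And>x. x \<in> Lev d 1 \<Longrightarrow> \<exists>h\<in>H. restr d n h = restr d n (sec d g x)"
  shows "\<exists>h\<in>H. restr d (Suc n) h = restr d (Suc n) g"
proof -
  obtain k where k: "\<And>x. x \<in> Lev d 1 \<Longrightarrow> k x \<in> H \<and> restr d n (k x) = restr d n (sec d g x)"
    using approx by metis
  have fix1: "g x = x" if "x \<in> Lev d 1" for x
    using triv that \<open>M < D\<close> by (auto simp: restr_eq_id_iff Lev_def Vle_def)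
  have "lift d x (k x) \<in> H" if x: "x \<in> Lev d 1" for x
  proof -
    have "restr d (length x + M) g = id"
      using restr_id_mono[OF triv] x \<open>M < D\<close> by (simp add: Lev_def)
    then have "restr d M (sec d g x) = id"
      by (rule sec_restr_eq_id[OF g Lev_subset_V[THEN subsetD, OF x]])
    moreover have "restr d M (k x) = restr d M (sec d g x)"
      using restr_eq_mono[of d n "k x" "sec d g x" M] k[OF x] \<open>M \<le> n\<close> by simp
    ultimately show ?thesis using lift_M[OF x] k[OF x] by simp
  qed
  then have "lift_prod d (Lev d 1) k \<in> H"
    using lift_prod_in_subgroup[OF finite_Lev order_refl subgroup_H] by blast
  moreover have "restr d (Suc n) (lift_prod d (Lev d 1) k) = restr d (Suc n) g"
    using restr_Suc_lift_prod[OF g fix1] k by simp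
  ultimately show ?thesis by blast
qed

lemma GP_restr_approx:
  assumes lift_M: "\<And>x h. x \<in> Lev d 1 \<Longrightarrow> h \<in> H \<Longrightarrow> restr d M h = id \<Longrightarrow> lift d x h \<in> H"
    and "M < D" and "g \<in> GP d D (restr d D ` H)"
  shows "\<exists>h\<in>H. restr d n h = restr d n g"
  using assms(3)
proof (induction n arbitrary: g)
  case 0
  then show ?case using GP_restr_eq restr_eq_mono by blast
next
  case (Suc n)
  show ?case
  proof (cases "Suc n \<le> D")
    case True
    then show ?thesis using GP_restr_eq[OF Suc.prems] restr_eq_mono by blast
  next
    case False
    obtain g' h0 where g': "g' \<in> GP d D (restr d D ` H)" "restr d D g' = id"
      and h0: "h0 \<in> H" and g_eq: "g = g' \<otimes>\<^bsub>AutT d\<^esub> h0"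
      using GP_decompose[OF Suc.prems] .
    have g'C: "g' \<in> carrier (AutT d)" using g' GP_subset_carrier by blast
    have approx: "\<exists>h\<in>H. restr d n h = restr d n (sec d g' x)" if "x \<in> Lev d 1" for x
      using Suc.IH[OF sec_in_GP[OF g'(1) Lev_subset_V[THEN subsetD, OF that]]] .
    have "M \<le> n" using False \<open>M < D\<close> by simp
    have "\<exists>h\<in>H. restr d (Suc n) h = restr d (Suc n) g'"
      using lift_M \<open>M < D\<close> \<open>M \<le> n\<close> g'C g'(2) approx by (rule stabilizer_restr_Suc_approx)
    then obtain h' where h': "h' \<in> H" "restr d (Suc n) h' = restr d (Suc n) g'" by blast
    have "restr d (Suc n) (h' \<otimes>\<^bsub>AutT d\<^esub> h0) = restr d (Suc n) g"
      using h' g_eq restr_mult[OF g'C] restr_mult[of h'] H_subset_carrier by auto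
    then show ?thesis using subgroup.m_closed[OF subgroup_H h'(1) h0] by blast
  qed
qed

theorem finite_type:
  obtains D P where "D \<ge> 1" "subgroup P (AutTn d D)" "H = GP d D P"
proof -
  obtain M where M: "\<And>x h. x \<in> Lev d 1 \<Longrightarrow> h \<in> H \<Longrightarrow> restr d M h = id \<Longrightarrow> lift d x h \<in> H"
    using lift_stabilizer by blast
  let ?D = "Suc M" let ?P = "restr d ?D ` H"
  have "H \<subseteq> GP d ?D ?P" by (rule H_subset_GP_restr)
  moreover have "g \<in> H" if g: "g \<in> GP d ?D ?P" for g
  proof -
    have "\<forall>n. \<exists>h\<in>H. restr d n h = restr d n g" using GP_restr_approx[OF M _ g] by simp
    then show ?thesis using closed_H g GP_subset_carrier unfolding closed_cong_def by blast
  qed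
  ultimately have "H = GP d ?D ?P" by blast
  then show ?thesis
    by (intro that[of "Suc M" "restr d (Suc M) ` H"] restr.subgroup_img_is_subgroup[OF subgroup_H])
      simp_all
qed

end

lemma (in group) normal_in_subgroup_conj_closed:
  assumes K: "subgroup K G" and N: "N \<lhd> G\<lparr>carrier := K\<rparr>" and x: "x \<in> K" and h: "h \<in> N"
  shows "x \<otimes> h \<otimes> inv x \<in> N"
  using normal.inv_op_closed2[OF N, of x h] x h m_inv_consistent[OF K x] by simp

theorem proposition2p10:
  fixes d :: nat and G H :: "(nat list \<Rightarrow> nat list) set"
  assumes "d \<ge> 2"
    and "subgroup G (AutT d)"
    and "H \<lhd> (AutT d)\<lparr>carrier := G\<rparr>"
    and "closed_cong d G" and "closed_cong d H"
    and "fractal d G" and "fractal d H"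
    and "H \<noteq> {\<one>\<^bsub>AutT d\<^esub>}"
    and "branch d H"
  shows "branch d (GH d G H) \<and>
    (\<forall>D P. D \<ge> 1 \<longrightarrow> subgroup P (AutTn d D) \<longrightarrow> H = GP d D P \<longrightarrow>
       finite (cosets_in (AutT d) (GH d G H) H) \<and>
       card (cosets_in (AutT d) (GH d G H) H) =
         card (cosets_in (AutTn d D) (restr d D ` GH d G H) (restr d D ` H)))"
proof -
  have H_in_G: "subgroup H ((AutT d)\<lparr>carrier := G\<rparr>)" using normal_imp_subgroup[OF assms(3)] .
  have H: "subgroup H (AutT d)" using AutT.incl_subgroup[OF assms(2) H_in_G] .
  have "H \<subseteq> G" using subgroup.subset[OF H_in_G] by simp
  interpret pair: self_similar_normal_pair d G H
    by (rule self_similar_normal_pair.intro[OF assms(2) H \<open>H \<subseteq> G\<close>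
          AutT.normal_in_subgroup_conj_closed[OF assms(2,3)]])
      (use assms(6,7) in \<open>auto simp: fractal_def\<close>)
  interpret closed_fractal_branch d H
    by (rule closed_fractal_branch.intro[OF H assms(5,7,9)])
  obtain D P where "H = GP d D P" using finite_type .
  then have "finite (cosets_in (AutT d) (GH d G H) H)" using pair.finite_card_cosets_GH by blast
  then have "branch d (GH d G H)"
    by (rule branch_if_finite_index_branch_subgroup[OF pair.subgroup_GH H pair.H_subset_GH assms(9)])
  then show ?thesis using pair.finite_card_cosets_GH by blast
qed

end
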